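(* Let $(n_2,n_3,\dots)$ be the $\{0,1\}$-valued random sequence defined below, and for $N\ge 2$ let $\rho(n_2,\dots,n_N)$ be the joint law of $(n_2,\dots,n_N)$ and $$\hat\rho(z_2,\dots,z_N)=\sum_{n_2,\dots,n_N\in\{0,1\}} z_2^{n_2}\cdots z_N^{n_N}\rho(n_2,\dots,n_N)$$ its generating function. Write $\alpha_i=1-1/i$. Then for every $N\ge 3$, $$\hat\rho(z_2,\dots,z_N)=\hat\rho(z_2,\dots,z_{N-1})+(z_N-1)\,\hat\rho\left(z_2\alpha_2,\dots,z_{\lfloor\sqrt N\rfloor}\alpha_{\lfloor\sqrt N\rfloor},z_{\lfloor\sqrt N\rfloor+1},\dots,z_{N-1}\right),$$ and the probability $P_N=\Pr(n_N=1)$ satisfies $P_N=\hat\rho\left(\alpha_2,\dots,\alpha_{\lfloor\sqrt N\rfloor}\right)$ (the generating function of $(n_2,\dots,n_{\lfloor\sqrt N\rfloor})$ evaluated at these arguments).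
   Context: The random sequence models "random primes": $n_2=1$ almost surely, and for each $N\ge 3$, conditionally on $(n_2,\dots,n_{N-1})$, one has $n_N=1$ with probability $\prod_{i=2}^{\lfloor\sqrt N\rfloor}(1-1/i)^{n_i}$ and $n_N=0$ otherwise. (Interpretation: $n_k=1$ means $k$ is declared prime; $N$ is declared prime iff it fails to connect to each earlier declared prime $i\le\sqrt N$, connections occurring independently with probability $1/i$.) *)

theory Defs
  imports "HOL-Probability.Probability"
begin

text \<open>Configurations (n_2,...,n_N) are encoded as extensional functions
  nat => nat, supported on {2..N} (undefined outside), i.e. elements of
  PiE {2..N} (%_. {0,1}).\<close>

definition isqrt :: "nat \<Rightarrow> nat" where
  "isqrt N = nat \<lfloor>sqrt (real N)\<rfloor>"

definition alpha :: "nat \<Rightarrow> real" where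
  "alpha i = 1 - 1 / real i"

text \<open>Conditional probability that n_N = 1 given (n_2,...,n_{N-1}).\<close>
definition cond_prob :: "nat \<Rightarrow> (nat \<Rightarrow> nat) \<Rightarrow> real" where
  "cond_prob N n = (\<Prod>i\<in>{2..isqrt N}. alpha i ^ n i)"

primrec rho_pmf :: "nat \<Rightarrow> (nat \<Rightarrow> nat) pmf" where
  "rho_pmf 0 = return_pmf (\<lambda>_. undefined)"
| "rho_pmf (Suc N) =
     (if N = 0 then return_pmf (\<lambda>_. undefined)
      else if N = 1 then return_pmf ((\<lambda>_. undefined)(2 := 1))
      else do {
        n \<leftarrow> rho_pmf N;
        b \<leftarrow> bernoulli_pmf (cond_prob (Suc N) n);
        return_pmf (n(Suc N := (if b then 1 else 0)))
      })"

definition rho :: "nat \<Rightarrow> (nat \<Rightarrow> nat) \<Rightarrow> real" where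
  "rho N n = pmf (rho_pmf N) n"

definition rhohat :: "nat \<Rightarrow> (nat \<Rightarrow> real) \<Rightarrow> real" where
  "rhohat N z = (\<Sum>n\<in>PiE {2..N} (\<lambda>_. {0,1::nat}).
                    (\<Prod>i\<in>{2..N}. z i ^ n i) * rho N n)"

end

theory Submission
  imports Defs
begin

text \<open>Conditioning on \<open>(n_2, ..., n_{N-1})\<close>, any expectation under the law of
  \<open>(n_2, ..., n_N)\<close> becomes an expectation under the law of \<open>(n_2, ..., n_{N-1})\<close> of the
  two-point average with weight \<open>cond_prob N n\<close>. For the monomial \<open>z_2^n_2 \<cdots> z_N^n_N\<close>
  this gives the recursion, because multiplying a monomial by
  \<open>cond_prob N n = \<Prod>_{i \<le> \<surd>N} \<alpha>_i^n_i\<close> rescales \<open>z_i\<close> by \<open>\<alpha>_i\<close> for \<open>i \<le> \<surd>N\<close>.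
  For the indicator of \<open>n_N = 1\<close> it gives \<open>P_N = E[cond_prob N]\<close>; since \<open>cond_prob N\<close> only
  depends on \<open>n_2, ..., n_{\<surd>N}\<close>, that expectation may be taken under the law of these
  coordinates, where it is the generating function evaluated at \<open>\<alpha>\<close>.\<close>

lemma set_pmf_rho_pmf: "set_pmf (rho_pmf N) \<subseteq> PiE {2..N} (\<lambda>_. {0,1::nat})"
proof (induction N)
  case 0
  then show ?case by auto
next
  case (Suc N)
  show ?case
  proof (cases "N \<le> 1")
    case True
    then show ?thesis by (auto simp: le_Suc_eq PiE_def extensional_def)
  next
    case False
    show ?thesis
    proof
      fix m assume "m \<in> set_pmf (rho_pmf (Suc N))"
      then obtain n b where n: "n \<in> set_pmf (rho_pmf N)" and m: "m = n(Suc N := b)" and "b \<in> {0,1}"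
        using False by auto
      moreover have "n \<in> PiE {2..N} (\<lambda>_. {0,1::nat})"
        using Suc.IH n by blast
      ultimately show "m \<in> PiE {2..Suc N} (\<lambda>_. {0,1::nat})"
        using False by (auto simp: PiE_iff extensional_def le_Suc_eq)
    qed
  qed
qed

lemma finite_configurations: "finite (PiE {2..(N::nat)} (\<lambda>_. {0,1::nat}))"
  by (auto intro!: finite_PiE)

lemma expectation_rho_pmf_eq_sum:
  "measure_pmf.expectation (rho_pmf N) (f :: _ \<Rightarrow> real) =
     (\<Sum>n\<in>PiE {2..N} (\<lambda>_. {0,1::nat}). f n * rho N n)"
  unfolding rho_def
  by (rule integral_measure_pmf_real[OF finite_configurations]) (use set_pmf_rho_pmf in blast)

lemma rhohat_eq_expectation:
  "rhohat N z = measure_pmf.expectation (rho_pmf N) (\<lambda>n. \<Prod>i\<in>{2..N}. z i ^ n i)"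
  by (simp add: rhohat_def expectation_rho_pmf_eq_sum)

lemma cond_prob_nonneg: "0 \<le> cond_prob N n"
  unfolding cond_prob_def alpha_def by (auto intro!: prod_nonneg)

lemma cond_prob_le_one: "cond_prob N n \<le> 1"
  unfolding cond_prob_def alpha_def by (auto intro!: prod_le_1 power_le_one)

lemma expectation_bernoulli_fun_upd:
  fixes h :: "('a \<Rightarrow> nat) \<Rightarrow> real"
  assumes "0 \<le> p" "p \<le> 1"
  shows "measure_pmf.expectation
           (bernoulli_pmf p \<bind> (\<lambda>b. return_pmf (n(k := (if b then 1 else 0))))) h
         = p * h (n(k := 1)) + (1 - p) * h (n(k := 0))"
proof -
  have "measure_pmf.expectation
          (bernoulli_pmf p \<bind> (\<lambda>b. return_pmf (n(k := (if b then 1 else 0))))) h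
      = (\<Sum>b\<in>UNIV. pmf (bernoulli_pmf p) b *\<^sub>R
           measure_pmf.expectation (return_pmf (n(k := (if b then 1 else 0)))) h)"
    by (rule pmf_expectation_bind) auto
  then show ?thesis
    using assms by (simp add: UNIV_bool)
qed

lemma expectation_rho_pmf_Suc:
  fixes h :: "(nat \<Rightarrow> nat) \<Rightarrow> real"
  assumes "N \<ge> 2"
  shows "measure_pmf.expectation (rho_pmf (Suc N)) h =
     measure_pmf.expectation (rho_pmf N)
       (\<lambda>n. cond_prob (Suc N) n * h (n(Suc N := 1)) + (1 - cond_prob (Suc N) n) * h (n(Suc N := 0)))"
proof -
  let ?extend = "\<lambda>n. bernoulli_pmf (cond_prob (Suc N) n) \<bind>
                      (\<lambda>b. return_pmf (n(Suc N := (if b then 1 else 0))))"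
  have "measure_pmf.expectation (rho_pmf (Suc N)) h =
        measure_pmf.expectation (rho_pmf N \<bind> ?extend) h"
    using assms by simp
  also have "\<dots> = (\<Sum>n\<in>PiE {2..N} (\<lambda>_. {0,1::nat}).
                     pmf (rho_pmf N) n *\<^sub>R measure_pmf.expectation (?extend n) h)"
    by (rule pmf_expectation_bind[OF finite_configurations _ set_pmf_rho_pmf]) auto
  finally show ?thesis
    by (simp add: expectation_rho_pmf_eq_sum rho_def expectation_bernoulli_fun_upd
        cond_prob_nonneg cond_prob_le_one mult.commute)
qed

lemma expectation_rho_pmf_local:
  fixes h :: "(nat \<Rightarrow> nat) \<Rightarrow> real"
  assumes "k \<le> M" and local: "\<And>n n'. (\<forall>i\<in>{2..k}. n i = n' i) \<Longrightarrow> h n = h n'"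
  shows "measure_pmf.expectation (rho_pmf M) h = measure_pmf.expectation (rho_pmf k) h"
proof (cases "k \<le> 1")
  case True
  then have h_const: "h = (\<lambda>_. h undefined)"
    using local by (intro ext) auto
  show ?thesis
    by (subst (1 2) h_const) simp
next
  case False
  show ?thesis
    using \<open>k \<le> M\<close>
  proof (induction M rule: dec_induct)
    case base
    then show ?case by simp
  next
    case (step M)
    have "h (n(Suc M := b)) = h n" for n b
      using step by (intro local) auto
    then have "measure_pmf.expectation (rho_pmf (Suc M)) h = measure_pmf.expectation (rho_pmf M) h"
      using step False by (subst expectation_rho_pmf_Suc) (simp_all add: algebra_simps)
    then show ?case
      using step by simp
  qed
qed

lemma isqrt_less:
  assumes N: "N \<ge> 2"
  shows "isqrt N < N"
proof -
  have "sqrt (real N) < sqrt (real N ^ 2)"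
    using N by (intro real_sqrt_less_mono) (simp add: power2_eq_square)
  then have "\<lfloor>sqrt (real N)\<rfloor> < int N"
    by simp linarith
  then show ?thesis
    unfolding isqrt_def using N by linarith
qed

lemma prod_power_fun_upd:
  assumes "M \<ge> 1"
  shows "(\<Prod>i\<in>{2..Suc M}. z i ^ (n(Suc M := b)) i) = z (Suc M) ^ b * (\<Prod>i\<in>{2..M}. z i ^ n i)"
proof -
  have "{2..Suc M} = insert (Suc M) {2..M}"
    using assms by auto
  then show ?thesis
    by simp
qed

lemma prod_power_rescale:
  fixes w z :: "nat \<Rightarrow> 'a :: comm_semiring_1"
  assumes "k \<le> M"
  shows "(\<Prod>i\<in>{2..k}. w i ^ n i) * (\<Prod>i\<in>{2..M}. z i ^ n i)
       = (\<Prod>i\<in>{2..M}. (if i \<le> k then z i * w i else z i) ^ n i)"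
proof -
  have "(\<Prod>i\<in>{2..M}. (if i \<le> k then z i * w i else z i) ^ n i)
      = (\<Prod>i\<in>{2..M}. z i ^ n i * (if i \<le> k then w i ^ n i else 1))"
    by (intro prod.cong) (auto simp: power_mult_distrib)
  also have "\<dots> = (\<Prod>i\<in>{2..M}. z i ^ n i) * (\<Prod>i\<in>{2..M}. if i \<le> k then w i ^ n i else 1)"
    by (rule prod.distrib)
  also have "(\<Prod>i\<in>{2..M}. if i \<le> k then w i ^ n i else 1) = (\<Prod>i\<in>{i\<in>{2..M}. i \<le> k}. w i ^ n i)"
    by (rule prod.inter_filter[symmetric]) auto
  also have "{i\<in>{2..M}. i \<le> k} = {2..k}"
    using assms by auto
  finally show ?thesis
    by (simp add: mult.commute)
qed

lemma rhohat_Suc: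
  assumes "M \<ge> 2"
  shows "rhohat (Suc M) z = rhohat M z
           + (z (Suc M) - 1) * rhohat M (\<lambda>i. if i \<le> isqrt (Suc M) then z i * alpha i else z i)"
proof -
  let ?z' = "\<lambda>i. if i \<le> isqrt (Suc M) then z i * alpha i else z i"
  have rescale: "cond_prob (Suc M) n * (\<Prod>i\<in>{2..M}. z i ^ n i) = (\<Prod>i\<in>{2..M}. ?z' i ^ n i)" for n
    unfolding cond_prob_def using isqrt_less[of "Suc M"] assms
    by (intro prod_power_rescale) auto
  have "rhohat (Suc M) z = measure_pmf.expectation (rho_pmf M)
          (\<lambda>n. cond_prob (Suc M) n * (\<Prod>i\<in>{2..Suc M}. z i ^ (n(Suc M := 1)) i)
             + (1 - cond_prob (Suc M) n) * (\<Prod>i\<in>{2..Suc M}. z i ^ (n(Suc M := 0)) i))"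
    unfolding rhohat_eq_expectation by (rule expectation_rho_pmf_Suc[OF assms])
  also have "\<dots> = measure_pmf.expectation (rho_pmf M)
          (\<lambda>n. (\<Prod>i\<in>{2..M}. z i ^ n i) + (z (Suc M) - 1) * (\<Prod>i\<in>{2..M}. ?z' i ^ n i))"
    using assms by (simp add: prod_power_fun_upd rescale[symmetric] algebra_simps)
  also have "\<dots> = rhohat M z + (z (Suc M) - 1) * rhohat M ?z'"
    by (simp add: rhohat_eq_expectation expectation_rho_pmf_eq_sum sum.distrib sum_distrib_left sum_subtractf
        algebra_simps)
  finally show ?thesis .
qed

lemma prob_rho_pmf_last:
  assumes "N \<ge> 3"
  shows "measure_pmf.prob (rho_pmf N) {n. n N = 1} = rhohat (isqrt N) alpha"
proof -
  obtain M where N: "N = Suc M" and "M \<ge> 2"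
    using assms by (cases N) auto
  have "measure_pmf.prob (rho_pmf N) {n. n N = 1}
      = measure_pmf.expectation (rho_pmf (Suc M)) (indicator {n. n (Suc M) = 1})"
    by (simp add: N)
  also have "\<dots> = measure_pmf.expectation (rho_pmf M) (cond_prob N)"
    using \<open>M \<ge> 2\<close> by (subst expectation_rho_pmf_Suc) (auto simp: indicator_def N)
  also have "\<dots> = measure_pmf.expectation (rho_pmf (isqrt N)) (cond_prob N)"
    using isqrt_less[of N] assms N
    by (intro expectation_rho_pmf_local) (auto simp: cond_prob_def intro!: prod.cong)
  also have "\<dots> = rhohat (isqrt N) alpha"
    by (simp add: rhohat_eq_expectation cond_prob_def[abs_def])
  finally show ?thesis .
qed

theorem mainTheorem12:
  fixes N :: nat and z :: "nat \<Rightarrow> real"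
  assumes "N \<ge> 3"
  shows "rhohat N z = rhohat (N - 1) z
           + (z N - 1) * rhohat (N - 1) (\<lambda>i. if i \<le> isqrt N then z i * alpha i else z i)
         \<and> measure_pmf.prob (rho_pmf N) {n. n N = 1} = rhohat (isqrt N) alpha"
proof -
  obtain M where "N = Suc M" and "M \<ge> 2"
    using assms by (cases N) auto
  then show ?thesis
    using rhohat_Suc prob_rho_pmf_last[OF assms] by simp
qed

end
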